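(* Consider the continuous Bomber Problem described in the context, with parameter $v\in(0,1]$. Let $x=x_t>0$ be defined for small $t>0$ and satisfy $$\frac{|\log t|}{x_t}\to\rho\in(0,\infty)\quad\text{as } t\to 0.$$ Let $j\in\{1,2,\ldots\}$ be such that $$\binom{j+1}{2}^{-1}\le\rho<\binom{j}{2}^{-1},$$ with the convention $\binom{1}{2}^{-1}=\infty$. Then, as $t\to 0$, $$\frac{K(x_t,t)}{x_t}\to \frac1j+\frac{\rho(j-1)}{2},\qquad \frac{1}{x_t}\left|\log\big(1-H(x_t,t)\big)\right|\to \frac1j+\frac{\rho(j-1)}{2},$$ $$\frac{1}{x_t}\left|\log\big(1-P(x_t,t)\big)\right|\to \frac1j+\frac{\rho(j+1)}{2}.$$
   Context: The Bomber Problem: a bomber holding an amount $x\ge 0$ of (continuously divisible) ammunition must survive for a remaining time $t\ge 0$. Enemies arrive according to a time-homogeneous Poisson process of rate 1. Upon meeting an enemy, the bomber chooses an amount $y\in[0,x]$ of its current ammunition to fire; the enemy survives this with probability $e^{-y}$, and if it survives it destroys the bomber with probability $v\in(0,1]$. Thus the bomber survives an encounter in which it spends $y$ with probability $a(y)=1-ve^{-y}$, and continues with ammunition $x-y$. $P(x,t)$ denotes the optimal probability that the bomber survives for time $t$ starting with ammunition $x$; $H(x,t)$ denotes the optimal conditional probability of survival given that an enemy is encountered at remaining time $t$ while holding ammunition $x$; and $K(x,t)\in[0,x]$ denotes the optimal amount of ammunition to fire at that enemy, so that $H(x,t)=a(K(x,t))P(x-K(x,t),t)$. *)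

theory Defs
  imports "HOL-Analysis.Analysis"
begin

text \<open>Survival probability of one encounter when spending y.\<close>
definition bomber_a :: "real \<Rightarrow> real \<Rightarrow> real" where
  "bomber_a v y = 1 - v * exp (- y)"

text \<open>Optimal survival probability in the truncated game in which the bomber is
  safe after at most n further encounters (value iteration).  With remaining time t,
  no enemy arrives with probability exp(-t); the first enemy arrives at remaining
  time s with density exp(-(t-s)).\<close>
primrec bomber_Q :: "real \<Rightarrow> nat \<Rightarrow> real \<Rightarrow> real \<Rightarrow> real" where
  "bomber_Q v 0 x t = 1"
| "bomber_Q v (Suc n) x t =
     exp (- t) + integral {0..t}
       (\<lambda>s. exp (- (t - s)) * (SUP y\<in>{0..x}. bomber_a v y * bomber_Q v n (x - y) s))"

definition bomber_P :: "real \<Rightarrow> real \<Rightarrow> real \<Rightarrow> real" where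
  "bomber_P v x t = (INF n. bomber_Q v n x t)"

text \<open>Optimal conditional survival probability H(x,t) when meeting an enemy.\<close>
definition bomber_H :: "real \<Rightarrow> real \<Rightarrow> real \<Rightarrow> real" where
  "bomber_H v x t = (SUP y\<in>{0..x}. bomber_a v y * bomber_P v (x - y) t)"

end

theory Submission
  imports Defs
begin

text \<open>Write F for a failure probability 1 - P, 1 - H or 1 - Q.  Two estimates hold
  uniformly in the ammunition z.  From below: with m + 1 encounters ahead,
  F \<ge> c exp(-z/(m+1)) t^((m+2)/2); by induction, since at each encounter the failure
  probability dominates both the risk v exp(-y) of dying now and the risk of dying later,
  hence their weighted geometric mean, in which the spent amount y cancels.  From above,
  for t \<le> 1: F \<le> sum_{k<N} 2 exp(-z/(k+1)) t^((k+2)/2) + 4 t^((N+2)/2), by firing, at each encounter,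
  the amount that balances the risk of dying now against the largest term of the bound
  for the rest of the game.
  When |log t| ~ \<rho> x the k-th term is exp(-x (1/(k+1) + \<rho> (k+2)/2)), and the threshold
  condition on \<rho> says that k + 1 = j minimises the exponent; this gives the rate
  1/j + \<rho> (j+1)/2 for P and, one factor t^(1/2) less, 1/j + \<rho> (j-1)/2 for H.
  Finally v exp(-K) \<le> 1 - H bounds K from below, and 1 - P(x - K) \<le> 1 - H, with x - K
  left for the remaining j - 1 encounters, bounds K from above.\<close>

lemma has_integral_exp_interval:
  fixes a b :: real
  assumes "a \<le> b"
  shows "(exp has_integral (exp b - exp a)) {a..b}"
proof (rule fundamental_theorem_of_calculus)
  fix x :: real
  have "(exp has_real_derivative exp x) (at x within {a..b})"
    using DERIV_exp has_field_derivative_at_within by blast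
  then show "(exp has_vector_derivative exp x) (at x within {a..b})"
    by (simp add: has_real_derivative_iff_has_vector_derivative)
qed (use assms in auto)

lemma integral_exp_interval: "(a::real) \<le> b \<Longrightarrow> integral {a..b} exp = exp b - exp a"
  using has_integral_exp_interval integral_unique by blast

lemma exp_integrable_on_interval: "exp integrable_on {a..b::real}"
  by (rule integrable_continuous_interval[OF continuous_on_exp[OF continuous_on_id]])

lemma has_integral_sqrt_power:
  assumes "0 \<le> t"
  shows "((\<lambda>s. sqrt s ^ k) has_integral (2 / (real k + 2) * sqrt t ^ (k + 2))) {0..t}"
proof -
  let ?F = "\<lambda>s. 2 / (real k + 2) * sqrt s ^ (k + 2)"
  have "((\<lambda>s. sqrt s ^ k) has_integral (?F t - ?F 0)) {0..t}"
  proof (rule fundamental_theorem_of_calculus_interior)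
    show "continuous_on {0..t} ?F" by (intro continuous_intros)
    fix x assume "x \<in> {0<..<t}"
    then have x: "0 < x" by simp
    have "(?F has_real_derivative
            2 / (real k + 2) * (real (k + 2) * sqrt x ^ (k + 2 - Suc 0) * (inverse (sqrt x) / 2))) (at x)"
      by (rule DERIV_cmult[OF DERIV_chain2[OF DERIV_pow DERIV_real_sqrt[OF x]]])
    moreover have "2 / (real k + 2) * (real (k + 2) * sqrt x ^ (k + 2 - Suc 0) * (inverse (sqrt x) / 2))
        = (2 / (real k + 2) * real (k + 2) / 2) * (sqrt x ^ (k + 1) * inverse (sqrt x))"
    proof -
      have "\<And>c d A B :: real. c * (d * A * (B / 2)) = (c * d / 2) * (A * B)"
        by (simp add: field_simps)
      moreover have "k + 2 - Suc 0 = k + 1" by simp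
      ultimately show ?thesis by metis
    qed
    moreover have "2 / (real k + 2) * real (k + 2) / 2 = 1"
      by (simp add: field_simps)
    moreover have "sqrt x ^ (k + 1) * inverse (sqrt x) = sqrt x ^ k"
      using x by simp
    ultimately have "(?F has_real_derivative sqrt x ^ k) (at x)"
      by (simp only: mult_1_left)
    then show "(?F has_vector_derivative sqrt x ^ k) (at x)"
      by (simp only: has_real_derivative_iff_has_vector_derivative)
  qed (use assms in auto)
  then show ?thesis by simp
qed

lemma integrable_exp_mult_antimono:
  fixes g :: "real \<Rightarrow> real"
  assumes g_le: "\<And>s. 0 \<le> s \<Longrightarrow> g s \<le> 1"
    and g_anti: "\<And>s s'. 0 \<le> s \<Longrightarrow> s \<le> s' \<Longrightarrow> g s' \<le> g s"
  shows "(\<lambda>s. exp s * g s) integrable_on {0..t}"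
proof -
  have "mono_on {0..t} (\<lambda>s. exp s * (1 - g s))"
  proof (rule mono_onI)
    fix s s' assume "s \<in> {0..t}" "s' \<in> {0..t}" "s \<le> s'"
    then show "exp s * (1 - g s) \<le> exp s' * (1 - g s')"
      using g_le g_anti by (intro mult_mono) auto
  qed
  then have "(\<lambda>s. exp s * (1 - g s)) integrable_on {0..t}"
    by (rule integrable_on_mono_on)
  from integrable_diff[OF exp_integrable_on_interval this]
  show ?thesis by (simp add: algebra_simps)
qed

lemma exp_average_bounds:
  fixes g :: "real \<Rightarrow> real"
  assumes g: "\<And>s. 0 \<le> s \<Longrightarrow> 0 \<le> g s \<and> g s \<le> 1"
    and g_anti: "\<And>s s'. 0 \<le> s \<Longrightarrow> s \<le> s' \<Longrightarrow> g s' \<le> g s"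
    and t: "0 \<le> t"
  shows "0 \<le> integral {0..t} (\<lambda>s. exp s * g s)"
    and "integral {0..t} (\<lambda>s. exp s * g s) \<le> exp t - 1"
proof -
  have int: "(\<lambda>s. exp s * g s) integrable_on {0..t}"
    using g g_anti by (intro integrable_exp_mult_antimono) auto
  show "0 \<le> integral {0..t} (\<lambda>s. exp s * g s)"
    using g by (intro integral_nonneg int) auto
  have "integral {0..t} (\<lambda>s. exp s * g s) \<le> integral {0..t} exp"
    using g by (intro integral_le int exp_integrable_on_interval) (auto intro: mult_right_le_one_le)
  then show "integral {0..t} (\<lambda>s. exp s * g s) \<le> exp t - 1"
    using integral_exp_interval[OF t] by simp
qed

text \<open>Extending the horizon from t to t' only mixes in values of g below g(t), which is
  at most the current survival probability exp(-t) (1 + J(t)) itself.\<close>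
lemma exp_average_antimono:
  fixes g :: "real \<Rightarrow> real"
  assumes g: "\<And>s. 0 \<le> s \<Longrightarrow> 0 \<le> g s \<and> g s \<le> 1"
    and g_anti: "\<And>s s'. 0 \<le> s \<Longrightarrow> s \<le> s' \<Longrightarrow> g s' \<le> g s"
    and t: "0 \<le> t" "t \<le> t'"
  shows "exp (-t') * (1 + integral {0..t'} (\<lambda>s. exp s * g s))
           \<le> exp (-t) * (1 + integral {0..t} (\<lambda>s. exp s * g s))"
proof -
  define J where "J r = integral {0..r} (\<lambda>s. exp s * g s)" for r
  have int: "(\<lambda>s. exp s * g s) integrable_on {0..t'}"
    using g g_anti by (intro integrable_exp_mult_antimono) auto
  have const_int: "(\<lambda>s. exp s * g t) integrable_on {a..b}" for a b
    using integrable_on_mult_left[OF exp_integrable_on_interval, of "g t"] by (simp add: mult.commute)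
  have "J t' = J t + integral {t..t'} (\<lambda>s. exp s * g s)"
    unfolding J_def using Henstock_Kurzweil_Integration.integral_combine[OF t int] by simp
  also have "integral {t..t'} (\<lambda>s. exp s * g s) \<le> integral {t..t'} (\<lambda>s. exp s * g t)"
    using t g_anti by (intro integral_le const_int integrable_on_subinterval[OF int])
      (auto intro: mult_left_mono)
  also have "\<dots> = (exp t' - exp t) * g t"
    using integral_exp_interval[OF t(2)] by simp
  finally have upper: "J t' \<le> J t + (exp t' - exp t) * g t" by simp
  have "(exp t - 1) * g t = integral {0..t} (\<lambda>s. exp s * g t)"
    using integral_exp_interval[OF t(1)] by simp
  also have "\<dots> \<le> J t"
    unfolding J_def using t g_anti
    by (intro integral_le const_int integrable_on_subinterval[OF int]) (auto intro: mult_left_mono)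
  finally have "exp t * g t \<le> 1 + J t"
    using g[OF t(1)] by (simp add: algebra_simps)
  then have "(exp (t' - t) - 1) * (exp t * g t) \<le> (exp (t' - t) - 1) * (1 + J t)"
    using t by (intro mult_left_mono) auto
  moreover have "(exp t' - exp t) * g t = (exp (t' - t) - 1) * (exp t * g t)"
    by (simp add: exp_diff field_simps)
  moreover have "(exp (t' - t) - 1) * (1 + J t) = exp (t' - t) * (1 + J t) - (1 + J t)"
    by (simp add: algebra_simps)
  ultimately have "1 + J t' \<le> exp (t' - t) * (1 + J t)"
    using upper by linarith
  then have "exp (-t') * (1 + J t') \<le> exp (-t') * (exp (t' - t) * (1 + J t))"
    by (intro mult_left_mono) auto
  also have "\<dots> = exp (-t) * (1 + J t)"
    by (simp add: exp_diff exp_minus field_simps)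
  finally show ?thesis unfolding J_def .
qed

lemma exp_convex_comb_le_max:
  fixes \<theta> a b :: real
  assumes "0 \<le> \<theta>" "\<theta> \<le> 1"
  shows "exp (\<theta> * a + (1 - \<theta>) * b) \<le> max (exp a) (exp b)"
proof -
  have "\<theta> * a + (1 - \<theta>) * b \<le> \<theta> * max a b + (1 - \<theta>) * max a b"
    using assms by (intro add_mono mult_left_mono) auto
  then have "exp (\<theta> * a + (1 - \<theta>) * b) \<le> exp (max a b)"
    by (simp add: algebra_simps)
  moreover have "exp (max a b) = max (exp a) (exp b)"
    by (simp add: max_def)
  ultimately show ?thesis by simp
qed

section \<open>The truncated games\<close>

definition bomber_HQ :: "real \<Rightarrow> nat \<Rightarrow> real \<Rightarrow> real \<Rightarrow> real" where
  "bomber_HQ v n z s = (SUP y\<in>{0..z}. bomber_a v y * bomber_Q v n (z - y) s)"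

lemma bomber_Q_Suc_eq:
  "bomber_Q v (Suc n) z t = exp (-t) * (1 + integral {0..t} (\<lambda>s. exp s * bomber_HQ v n z s))"
proof -
  have "(\<lambda>s. exp (- (t - s)) * bomber_HQ v n z s) = (\<lambda>s. exp (-t) * (exp s * bomber_HQ v n z s))"
    by (auto simp: exp_diff exp_minus field_simps)
  then have "bomber_Q v (Suc n) z t = exp (-t) + exp (-t) * integral {0..t} (\<lambda>s. exp s * bomber_HQ v n z s)"
    by (simp add: bomber_HQ_def[symmetric])
  then show ?thesis
    by (simp only: distrib_left mult_1_right)
qed

locale bomber =
  fixes v :: real
  assumes v_pos: "0 < v" and v_le_one: "v \<le> 1"
begin

lemma a_in_unit: "0 \<le> y \<Longrightarrow> 0 \<le> bomber_a v y \<and> bomber_a v y \<le> 1"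
  using v_pos v_le_one mult_le_one[of v "exp (-y)"] by (simp add: bomber_a_def)

lemma a_mono: "y \<le> y' \<Longrightarrow> bomber_a v y \<le> bomber_a v y'"
  using v_pos by (simp add: bomber_a_def)

lemma one_minus_a_mult_bounds:
  assumes "0 \<le> y" "0 \<le> R" "R \<le> 1"
  shows "v * exp (-y) \<le> 1 - bomber_a v y * R"
    and "1 - R \<le> 1 - bomber_a v y * R"
    and "1 - bomber_a v y * R \<le> v * exp (-y) + (1 - R)"
    and "0 \<le> 1 - bomber_a v y * R"
proof -
  have a: "0 \<le> bomber_a v y" "bomber_a v y \<le> 1" using a_in_unit assms(1) by auto
  have e: "1 - bomber_a v y = v * exp (-y)" by (simp add: bomber_a_def)
  show "v * exp (-y) \<le> 1 - bomber_a v y * R"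
    using e a assms mult_right_le_one_le[of "bomber_a v y" R] by linarith
  show "1 - R \<le> 1 - bomber_a v y * R"
    using a assms mult_right_mono[of "bomber_a v y" 1 R] by linarith
  show "1 - bomber_a v y * R \<le> v * exp (-y) + (1 - R)"
    using e a assms mult_nonneg_nonneg[of "1 - bomber_a v y" "1 - R"] by (simp add: algebra_simps)
  show "0 \<le> 1 - bomber_a v y * R"
    using a assms mult_le_one[of "bomber_a v y" R] by linarith
qed

lemma HQ_in_unit_antimono_if_Q:
  assumes Q: "\<forall>z s. 0 \<le> z \<longrightarrow> 0 \<le> s \<longrightarrow> 0 \<le> bomber_Q v n z s \<and> bomber_Q v n z s \<le> 1"
    and Q_anti: "\<forall>z s s'. 0 \<le> z \<longrightarrow> 0 \<le> s \<longrightarrow> s \<le> s' \<longrightarrow> bomber_Q v n z s' \<le> bomber_Q v n z s"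
    and z: "0 \<le> z"
  shows "\<And>s y. 0 \<le> s \<Longrightarrow> y \<in> {0..z} \<Longrightarrow> bomber_a v y * bomber_Q v n (z - y) s \<le> bomber_HQ v n z s"
    and "\<And>s. 0 \<le> s \<Longrightarrow> 0 \<le> bomber_HQ v n z s \<and> bomber_HQ v n z s \<le> 1"
    and "\<And>s s'. 0 \<le> s \<Longrightarrow> s \<le> s' \<Longrightarrow> bomber_HQ v n z s' \<le> bomber_HQ v n z s"
proof -
  have ne: "{0..z} \<noteq> {}" using z by simp
  have shot: "0 \<le> bomber_a v y * bomber_Q v n (z - y) s \<and> bomber_a v y * bomber_Q v n (z - y) s \<le> 1"
    if "y \<in> {0..z}" "0 \<le> s" for y s
    using a_in_unit[of y] Q[rule_format, of "z - y" s] that by (auto intro: mult_le_one)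
  have bdd: "bdd_above ((\<lambda>y. bomber_a v y * bomber_Q v n (z - y) s) ` {0..z})" if "0 \<le> s" for s
    using shot that by (intro bdd_aboveI2[of _ _ 1]) auto
  show upper: "bomber_a v y * bomber_Q v n (z - y) s \<le> bomber_HQ v n z s"
    if "0 \<le> s" "y \<in> {0..z}" for s y
    unfolding bomber_HQ_def using bdd that by (intro cSUP_upper) auto
  show "0 \<le> bomber_HQ v n z s \<and> bomber_HQ v n z s \<le> 1" if s: "0 \<le> s" for s
  proof
    show "0 \<le> bomber_HQ v n z s" using upper[OF s, of 0] shot[of 0 s] z s by auto
    show "bomber_HQ v n z s \<le> 1" unfolding bomber_HQ_def using shot s ne by (intro cSUP_least) auto
  qed
  show "bomber_HQ v n z s' \<le> bomber_HQ v n z s" if "0 \<le> s" "s \<le> s'" for s s'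
    unfolding bomber_HQ_def
  proof (rule cSUP_mono[OF ne bdd[OF that(1)]])
    fix y assume y: "y \<in> {0..z}"
    have "bomber_a v y * bomber_Q v n (z - y) s' \<le> bomber_a v y * bomber_Q v n (z - y) s"
      using Q_anti[rule_format, of "z - y" s s'] a_in_unit[of y] y that by (intro mult_left_mono) auto
    then show "\<exists>y'\<in>{0..z}. bomber_a v y * bomber_Q v n (z - y) s' \<le> bomber_a v y' * bomber_Q v n (z - y') s"
      using y by blast
  qed
qed

lemma Q_in_unit_antimono:
  "(\<forall>z s. 0 \<le> z \<longrightarrow> 0 \<le> s \<longrightarrow> 0 \<le> bomber_Q v n z s \<and> bomber_Q v n z s \<le> 1) \<and>
   (\<forall>z s s'. 0 \<le> z \<longrightarrow> 0 \<le> s \<longrightarrow> s \<le> s' \<longrightarrow> bomber_Q v n z s' \<le> bomber_Q v n z s)"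
proof (induction n)
  case 0
  then show ?case by simp
next
  case (Suc n)
  note HQ = HQ_in_unit_antimono_if_Q(2,3)[OF Suc.IH[THEN conjunct1] Suc.IH[THEN conjunct2]]
  show ?case
  proof (intro conjI allI impI)
    fix z s :: real assume "0 \<le> z" "0 \<le> s"
    note J = exp_average_bounds[of "bomber_HQ v n z", OF HQ[OF \<open>0 \<le> z\<close>] \<open>0 \<le> s\<close>]
    then show "0 \<le> bomber_Q v (Suc n) z s"
      unfolding bomber_Q_Suc_eq by simp
    have "exp (-s) * (1 + integral {0..s} (\<lambda>r. exp r * bomber_HQ v n z r)) \<le> exp (-s) * exp s"
      using J by (intro mult_left_mono) auto
    then show "bomber_Q v (Suc n) z s \<le> 1"
      unfolding bomber_Q_Suc_eq by (simp add: exp_minus)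
  next
    fix z s s' :: real assume z: "0 \<le> z" and s: "0 \<le> s" "s \<le> s'"
    show "bomber_Q v (Suc n) z s' \<le> bomber_Q v (Suc n) z s"
      unfolding bomber_Q_Suc_eq by (rule exp_average_antimono[of "bomber_HQ v n z", OF HQ[OF z] s])
  qed
qed

lemma Q_in_unit: "0 \<le> z \<Longrightarrow> 0 \<le> s \<Longrightarrow> 0 \<le> bomber_Q v n z s \<and> bomber_Q v n z s \<le> 1"
  using Q_in_unit_antimono by blast

lemmas HQ_ge = HQ_in_unit_antimono_if_Q(1)
    [OF Q_in_unit_antimono[THEN conjunct1] Q_in_unit_antimono[THEN conjunct2]]
  and HQ_in_unit = HQ_in_unit_antimono_if_Q(2)
    [OF Q_in_unit_antimono[THEN conjunct1] Q_in_unit_antimono[THEN conjunct2]]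
  and HQ_antimono = HQ_in_unit_antimono_if_Q(3)
    [OF Q_in_unit_antimono[THEN conjunct1] Q_in_unit_antimono[THEN conjunct2]]

lemma one_minus_Q_Suc_eq:
  assumes z: "0 \<le> z" and t: "0 \<le> t"
  shows "1 - bomber_Q v (Suc n) z t = exp (-t) * integral {0..t} (\<lambda>s. exp s * (1 - bomber_HQ v n z s))"
proof -
  have "(\<lambda>s. exp s * bomber_HQ v n z s) integrable_on {0..t}"
    using HQ_in_unit[OF z] HQ_antimono[OF z] by (intro integrable_exp_mult_antimono) auto
  then have "integral {0..t} (\<lambda>s. exp s * (1 - bomber_HQ v n z s))
      = exp t - 1 - integral {0..t} (\<lambda>s. exp s * bomber_HQ v n z s)"
    using integral_diff[OF exp_integrable_on_interval] integral_exp_interval[OF t]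
    by (simp add: algebra_simps)
  then show ?thesis
    unfolding bomber_Q_Suc_eq by (simp add: exp_minus field_simps)
qed

lemma integrable_exp_mult_one_minus_HQ:
  assumes "0 \<le> z"
  shows "(\<lambda>s. exp s * (1 - bomber_HQ v n z s)) integrable_on {0..t}"
proof -
  have "(\<lambda>s. exp s * bomber_HQ v n z s) integrable_on {0..t}"
    using HQ_in_unit[OF assms] HQ_antimono[OF assms] by (intro integrable_exp_mult_antimono) auto
  from integrable_diff[OF exp_integrable_on_interval this]
  show ?thesis by (simp add: algebra_simps)
qed

lemma one_minus_Q_Suc_ge:
  assumes z: "0 \<le> z" and t: "0 \<le> t" and b: "\<And>s. s \<in> {0..t} \<Longrightarrow> b s \<le> 1 - bomber_HQ v n z s"
    and b_int: "(\<lambda>s. exp s * b s) integrable_on {0..t}"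
  shows "exp (-t) * integral {0..t} (\<lambda>s. exp s * b s) \<le> 1 - bomber_Q v (Suc n) z t"
proof -
  have "integral {0..t} (\<lambda>s. exp s * b s) \<le> integral {0..t} (\<lambda>s. exp s * (1 - bomber_HQ v n z s))"
    using b by (intro integral_le b_int integrable_exp_mult_one_minus_HQ z) (auto intro: mult_left_mono)
  then show ?thesis
    unfolding one_minus_Q_Suc_eq[OF z t] by (intro mult_left_mono) auto
qed

lemma one_minus_Q_Suc_le:
  assumes z: "0 \<le> z" and t: "0 \<le> t" and b: "\<And>s. s \<in> {0..t} \<Longrightarrow> 1 - bomber_HQ v n z s \<le> b s"
    and b_int: "b integrable_on {0..t}"
  shows "1 - bomber_Q v (Suc n) z t \<le> integral {0..t} b"
proof -
  have "integral {0..t} (\<lambda>s. exp s * (1 - bomber_HQ v n z s)) \<le> integral {0..t} (\<lambda>s. exp t * b s)"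
  proof (intro integral_le integrable_exp_mult_one_minus_HQ z)
    show "(\<lambda>s. exp t * b s) integrable_on {0..t}" using b_int by simp
    fix s assume s: "s \<in> {0..t}"
    then show "exp s * (1 - bomber_HQ v n z s) \<le> exp t * b s"
      using HQ_in_unit[OF z, of s] b[OF s] by (intro mult_mono) auto
  qed
  then show ?thesis
    unfolding one_minus_Q_Suc_eq[OF z t] by (simp add: exp_minus field_simps)
qed

section \<open>Lower bounds on the failure probabilities\<close>

text \<open>The bomber dies either at the current encounter (probability v exp(-y)) or later
  (probability 1 - R); the failure probability dominates the weighted geometric mean of both
  bounds, and with weights 1/(m + 2) and (m + 1)/(m + 2) the dependence on y cancels.\<close>
lemma one_minus_a_mult_ge_geometric_mean:
  assumes c: "0 < c" and s: "0 \<le> s" and y: "0 \<le> y" and R: "0 \<le> R" "R \<le> 1"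
    and later: "c * exp (-s - (z - y) / (real m + 1)) * sqrt s ^ (m + 2) \<le> 1 - R"
  shows "exp ((ln v + (real m + 1) * ln c) / (real m + 2)) * exp (-s - z / (real m + 2)) * sqrt s ^ (m + 1)
         \<le> 1 - bomber_a v y * R"
proof (cases "s = 0")
  case True
  then show ?thesis using one_minus_a_mult_bounds[OF y R] by simp
next
  case False
  then have "0 < s" using s by simp
  define l where "l = ln (sqrt s)"
  have sqrt_power: "sqrt s ^ k = exp (real k * l)" for k
    using \<open>0 < s\<close> by (simp add: l_def exp_of_nat_mult)
  define lA where "lA = ln v - y"
  define lB where "lB = ln c + (-s - (z - y) / (real m + 1)) + (real m + 2) * l"
  define \<theta> where "\<theta> = 1 / (real m + 2)"
  have now: "v * exp (-y) = exp lA"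
    using v_pos by (simp add: lA_def exp_diff exp_minus field_simps)
  have "c * exp (-s - (z - y) / (real m + 1)) * sqrt s ^ (m + 2) = exp lB"
    unfolding lB_def exp_add using c sqrt_power[of "m + 2"] by simp
  then have "exp (\<theta> * lA + (1 - \<theta>) * lB) \<le> 1 - bomber_a v y * R"
    using exp_convex_comb_le_max[of \<theta> lA lB] one_minus_a_mult_bounds(1,2)[OF y R] later now
    by (simp add: \<theta>_def)
  moreover have "\<theta> * lA + (1 - \<theta>) * lB
      = (ln v + (real m + 1) * ln c) / (real m + 2) + (-s - z / (real m + 2)) + (real m + 1) * l
        + s / (real m + 2)"
  proof -
    have "1 / (q + 1) * (ln v - y) + (1 - 1 / (q + 1)) * (ln c + (-s - (z - y) / q) + (q + 1) * l)
        = (ln v + q * ln c) / (q + 1) + (-s - z / (q + 1)) + q * l + s / (q + 1)"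
      if "0 < q" for q :: real
      using that by (simp add: divide_simps) (simp add: algebra_simps)
    from this[of "real m + 1"] show ?thesis
      unfolding \<theta>_def lA_def lB_def by (simp add: add.assoc)
  qed
  moreover have "exp ((ln v + (real m + 1) * ln c) / (real m + 2)) * exp (-s - z / (real m + 2))
      * sqrt s ^ (m + 1)
      = exp ((ln v + (real m + 1) * ln c) / (real m + 2) + (-s - z / (real m + 2)) + (real m + 1) * l)"
    unfolding exp_add using sqrt_power[of "m + 1"] by simp
  ultimately show ?thesis
    using s by (smt (verit) divide_nonneg_nonneg exp_le_cancel_iff of_nat_0_le_iff)
qed

lemma SUP_shot_failure_ge:
  assumes c: "0 < c" and s: "0 \<le> s" and z: "0 \<le> z"
    and R: "\<And>w. 0 \<le> w \<Longrightarrow> 0 \<le> R w \<and> R w \<le> 1"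
    and later: "\<And>w. 0 \<le> w \<Longrightarrow> c * exp (-s - w / (real m + 1)) * sqrt s ^ (m + 2) \<le> 1 - R w"
  shows "exp ((ln v + (real m + 1) * ln c) / (real m + 2)) * exp (-s - z / (real m + 2)) * sqrt s ^ (m + 1)
    \<le> 1 - (SUP y\<in>{0..z}. bomber_a v y * R (z - y))"
proof -
  have "(SUP y\<in>{0..z}. bomber_a v y * R (z - y))
      \<le> 1 - exp ((ln v + (real m + 1) * ln c) / (real m + 2)) * exp (-s - z / (real m + 2)) * sqrt s ^ (m + 1)"
  proof (rule cSUP_least)
    fix y assume y: "y \<in> {0..z}"
    then have "0 \<le> y" "0 \<le> R (z - y)" "R (z - y) \<le> 1"
        "c * exp (-s - (z - y) / (real m + 1)) * sqrt s ^ (m + 2) \<le> 1 - R (z - y)"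
      using R[of "z - y"] later[of "z - y"] by auto
    from one_minus_a_mult_ge_geometric_mean[OF c s this]
    show "bomber_a v y * R (z - y)
        \<le> 1 - exp ((ln v + (real m + 1) * ln c) / (real m + 2)) * exp (-s - z / (real m + 2)) * sqrt s ^ (m + 1)"
      by simp
  qed (use z in simp)
  then show ?thesis by simp
qed

lemma Q_one_failure_ge:
  assumes z: "0 \<le> z" and t: "0 \<le> t"
  shows "v * exp (-t - z) * t \<le> 1 - bomber_Q v (Suc 0) z t"
proof -
  have "v * exp (-z) \<le> 1 - bomber_HQ v 0 z s" for s
  proof -
    have "bomber_HQ v 0 z s \<le> bomber_a v z"
      unfolding bomber_HQ_def using z by (intro cSUP_least) (auto intro: a_mono)
    then show ?thesis by (simp add: bomber_a_def)
  qed
  then have "exp (-t) * integral {0..t} (\<lambda>s. exp s * (v * exp (-z))) \<le> 1 - bomber_Q v (Suc 0) z t"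
    using integrable_on_mult_left[OF exp_integrable_on_interval, of "v * exp (-z)"]
    by (intro one_minus_Q_Suc_ge[OF z t]) (auto simp: mult.commute)
  moreover have "integral {0..t} (\<lambda>s. exp s * (v * exp (-z))) = (exp t - 1) * (v * exp (-z))"
    using integral_exp_interval[OF t] by simp
  ultimately have fail: "exp (-t) * ((exp t - 1) * (v * exp (-z))) \<le> 1 - bomber_Q v (Suc 0) z t"
    by (simp only:)
  have "v * exp (-t - z) * t = exp (-t) * (t * (v * exp (-z)))"
    by (simp add: exp_diff exp_minus field_simps)
  also have "\<dots> \<le> exp (-t) * ((exp t - 1) * (v * exp (-z)))"
  proof -
    have "t \<le> exp t - 1" using exp_ge_add_one_self[of t] by linarith
    then show ?thesis using v_pos by (intro mult_left_mono mult_right_mono) auto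
  qed
  finally show ?thesis using fail by linarith
qed

lemma Q_failure_lower_step:
  assumes c: "0 < c"
    and later: "\<And>z t. 0 \<le> z \<Longrightarrow> 0 \<le> t \<Longrightarrow>
      c * exp (-t - z / (real m + 1)) * sqrt t ^ (m + 2) \<le> 1 - bomber_Q v (Suc m) z t"
    and z: "0 \<le> z" and t: "0 \<le> t"
  defines "C \<equiv> exp ((ln v + (real m + 1) * ln c) / (real m + 2))"
  shows "C * 2 / (real m + 3) * exp (-t - z / (real m + 2)) * sqrt t ^ (m + 3)
    \<le> 1 - bomber_Q v (Suc (Suc m)) z t"
proof -
  define b where "b s = C * exp (-s - z / (real m + 2)) * sqrt s ^ (m + 1)" for s
  have "b s \<le> 1 - bomber_HQ v (Suc m) z s" if "s \<in> {0..t}" for s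
    unfolding b_def C_def bomber_HQ_def using that z Q_in_unit later
    by (intro SUP_shot_failure_ge c) (auto simp del: bomber_Q.simps)
  moreover have "exp s * b s = C * exp (- z / (real m + 2)) * sqrt s ^ (m + 1)" for s
  proof -
    have "exp s * b s = C * (exp s * exp (-s - z / (real m + 2))) * sqrt s ^ (m + 1)"
      by (simp add: b_def ac_simps)
    also have "exp s * exp (-s - z / (real m + 2)) = exp (- z / (real m + 2))"
      by (simp add: exp_add[symmetric])
    finally show ?thesis .
  qed
  moreover have int: "((\<lambda>s. C * exp (- z / (real m + 2)) * sqrt s ^ (m + 1)) has_integral
      C * exp (- z / (real m + 2)) * (2 / (real (m + 1) + 2) * sqrt t ^ (m + 1 + 2))) {0..t}"
    by (rule has_integral_mult_right[OF has_integral_sqrt_power[OF t]])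
  ultimately have "exp (-t) * (C * exp (- z / (real m + 2)) * (2 / (real (m + 1) + 2) * sqrt t ^ (m + 1 + 2)))
      \<le> 1 - bomber_Q v (Suc (Suc m)) z t"
    using one_minus_Q_Suc_ge[OF z t, of b "Suc m"] integral_unique[OF int] by auto
  moreover have "C * 2 / (real m + 3) * exp (-t - z / (real m + 2)) * sqrt t ^ (m + 3)
      = exp (-t) * (C * exp (- z / (real m + 2)) * (2 / (real (m + 1) + 2) * sqrt t ^ (m + 1 + 2)))"
  proof -
    have "exp (-t - z / (real m + 2)) = exp (-t) * exp (- z / (real m + 2))"
      by (simp add: exp_add[symmetric])
    moreover have "real (m + 1) + 2 = real m + 3" "m + 1 + 2 = m + 3" by simp_all
    ultimately show ?thesis by (simp only:) (simp add: field_simps)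
  qed
  ultimately show ?thesis by linarith
qed

lemma Q_failure_lower:
  "\<exists>c>0. \<forall>z t. 0 \<le> z \<longrightarrow> 0 \<le> t \<longrightarrow>
     c * exp (-t - z / (real m + 1)) * sqrt t ^ (m + 2) \<le> 1 - bomber_Q v (Suc m) z t"
proof (induction m)
  case 0
  have "sqrt t ^ 2 = t" if "0 \<le> t" for t :: real using that by simp
  then show ?case
    using v_pos Q_one_failure_ge by auto
next
  case (Suc m)
  then obtain c where "c > 0" and "\<And>z t. 0 \<le> z \<Longrightarrow> 0 \<le> t \<Longrightarrow>
      c * exp (-t - z / (real m + 1)) * sqrt t ^ (m + 2) \<le> 1 - bomber_Q v (Suc m) z t"
    by blast
  from Q_failure_lower_step[OF this] show ?case
    by (intro exI[of _ "exp ((ln v + (real m + 1) * ln c) / (real m + 2)) * 2 / (real m + 3)"])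
      (auto simp: add.commute numeral_3_eq_3)
qed

end

section \<open>Upper bounds on the failure probabilities\<close>

text \<open>Failure bounds for 1 - Q and 1 - HQ that hold for every number of encounters when
  t \<le> 1.  The term with index k is of order exp(-z/(k+1)) t^((k+2)/2); in the regime
  t = exp(-\<rho> x) this is exp(-x (1/(k+1) + \<rho> (k+2)/2)), whose minimal exponent over k
  is the rate of the theorem.\<close>
definition Q_fail_bound :: "nat \<Rightarrow> real \<Rightarrow> real \<Rightarrow> real" where
  "Q_fail_bound N z t = (\<Sum>k<N. 2 * exp (- z / (real k + 1)) * sqrt t ^ (k + 2)) + 4 * sqrt t ^ (N + 2)"

definition HQ_fail_bound :: "real \<Rightarrow> nat \<Rightarrow> real \<Rightarrow> real \<Rightarrow> real" where
  "HQ_fail_bound v N z s = v * exp (-z)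
     + (\<Sum>k<N. (v + 2) * exp (- z / (real k + 2)) * sqrt s ^ (k + 1)) + 4 * sqrt s ^ (N + 2)"

lemma Q_fail_bound_nonneg: "0 \<le> t \<Longrightarrow> 0 \<le> Q_fail_bound N z t"
  unfolding Q_fail_bound_def by (intro add_nonneg_nonneg sum_nonneg) auto

lemma fail_term_after_shot_le:
  assumes s: "0 \<le> s" and E: "0 < E" "sqrt s ^ (k + 1) * exp (- z / (real k + 2)) \<le> E"
  shows "exp (- (z + ln E) / (real k + 1)) * sqrt s ^ (k + 2) \<le> exp (- z / (real k + 2)) * sqrt s ^ (k + 1)"
proof (cases "s = 0")
  case True then show ?thesis by simp
next
  case False
  then have s0: "0 < s" using s by simp
  define l where "l = ln (sqrt s)"
  define p where "p = real k + 1"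
  have p: "p > 0" unfolding p_def by simp
  have pw: "sqrt s ^ n = exp (real n * l)" for n
    using s0 by (simp add: l_def exp_of_nat_mult)
  have "ln (sqrt s ^ (k + 1) * exp (- z / (real k + 2))) \<le> ln E"
    using E s0 by (subst ln_le_cancel_iff) auto
  then have h: "p * l - z * (1 / (p + 1)) \<le> ln E"
    using s0 by (simp add: ln_mult pw p_def ln_realpow l_def[symmetric] algebra_simps)
  have "(z + p * l - z * (1/(p + 1))) * (1 / p) \<le> (z + ln E) * (1 / p)"
    using h p by (intro mult_right_mono) auto
  moreover have "(z + p * l - z * (1/(p + 1))) * (1 / p) = l + z * (1/(p + 1))"
    using p by (simp add: divide_simps) (simp add: algebra_simps)
  ultimately have key: "(p + 1) * l - (z + ln E) * (1 / p) \<le> p * l - z * (1/(p + 1))"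
    by (simp add: algebra_simps)
  have L: "exp (- (z + ln E) / (real k + 1)) * sqrt s ^ (k + 2) = exp ((p + 1) * l - (z + ln E) * (1 / p))"
    unfolding pw p_def by (simp add: exp_add[symmetric] algebra_simps add_divide_distrib diff_divide_distrib)
  have R: "exp (- z / (real k + 2)) * sqrt s ^ (k + 1) = exp (p * l - z * (1/(p + 1)))"
    unfolding pw p_def by (simp add: exp_add[symmetric] algebra_simps add_divide_distrib diff_divide_distrib)
  show ?thesis unfolding L R using key by simp
qed

lemma Q_fail_bound_after_shot_le:
  assumes s: "0 \<le> s" and E: "0 < E"
    and E_ge: "\<And>k. k < N \<Longrightarrow> sqrt s ^ (k + 1) * exp (- z / (real k + 2)) \<le> E"
  shows "Q_fail_bound N (z + ln E) s
    \<le> (\<Sum>k<N. 2 * (exp (- z / (real k + 2)) * sqrt s ^ (k + 1))) + 4 * sqrt s ^ (N + 2)"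
  unfolding Q_fail_bound_def
proof (intro add_right_mono sum_mono)
  fix k assume "k \<in> {..<N}"
  from fail_term_after_shot_le[OF s E E_ge] \<open>k \<in> {..<N}\<close>
  show "2 * exp (- (z + ln E) / (real k + 1)) * sqrt s ^ (k + 2)
      \<le> 2 * (exp (- z / (real k + 2)) * sqrt s ^ (k + 1))"
    by simp
qed

lemma exists_shot_level:
  assumes z: "0 \<le> z" and s: "0 \<le> s" "s \<le> 1"
  shows "\<exists>E. exp (-z) \<le> E \<and> E \<le> 1 \<and>
    (\<forall>k<N. sqrt s ^ (k + 1) * exp (- z / (real k + 2)) \<le> E) \<and>
    E \<le> exp (-z) + (\<Sum>k<N. exp (- z / (real k + 2)) * sqrt s ^ (k + 1))"
proof -
  define f where "f k = sqrt s ^ k * exp (- z / (real k + 1))" for k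
  define E where "E = Max (f ` {..N})"
  have fin: "finite (f ` {..N})" "f ` {..N} \<noteq> {}" by auto
  have f_le: "f k \<le> E" if "k \<le> N" for k
    unfolding E_def using that fin by (intro Max_ge) auto
  have "f k \<le> 1" for k
    unfolding f_def using s z by (intro mult_le_one) (auto simp: power_le_one)
  then have E_le_1: "E \<le> 1"
    unfolding E_def using fin by (subst Max_le_iff) auto
  have "E \<in> f ` {..N}"
    unfolding E_def using fin by (rule Max_in)
  then obtain k where "k \<le> N" "E = f k" by auto
  then have "E \<le> (\<Sum>k\<le>N. f k)"
    using s member_le_sum[of k "{..N}" f] by (auto simp: f_def)
  also have "\<dots> = f 0 + (\<Sum>k<N. f (Suc k))"
    by (simp only: lessThan_Suc_atMost[symmetric] sum.lessThan_Suc_shift)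
  also have "\<dots> = exp (-z) + (\<Sum>k<N. exp (- z / (real k + 2)) * sqrt s ^ (k + 1))"
    unfolding f_def by (intro arg_cong2[where f = "(+)"] sum.cong) (auto simp: add.commute mult.commute)
  finally have E_sum: "E \<le> exp (-z) + (\<Sum>k<N. exp (- z / (real k + 2)) * sqrt s ^ (k + 1))" .
  have "sqrt s ^ (k + 1) * exp (- z / (real k + 2)) \<le> E" if "k < N" for k
    using f_le[of "Suc k"] that unfolding f_def by (simp add: add.commute)
  moreover have "exp (-z) \<le> E"
    using f_le[of 0] unfolding f_def by simp
  ultimately show ?thesis using E_le_1 E_sum by blast
qed

context bomber
begin

text \<open>Fire y = -ln E, where E is the largest of the terms exp(-z) and
  s^((k + 1)/2) exp(-z/(k + 2)): dying now costs v E, and after the shot each term of the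
  failure bound for the remaining ammunition is at most the corresponding term here.\<close>
lemma exists_shot_fail_le:
  assumes z: "0 \<le> z" and s: "0 \<le> s" "s \<le> 1"
    and R: "\<And>w. w \<in> {0..z} \<Longrightarrow> 0 \<le> R w \<and> R w \<le> 1 \<and> 1 - R w \<le> Q_fail_bound N w s"
  shows "\<exists>y\<in>{0..z}. 1 - bomber_a v y * R (z - y) \<le> HQ_fail_bound v N z s"
proof -
  obtain E where E: "exp (-z) \<le> E" "E \<le> 1"
      "\<And>k. k < N \<Longrightarrow> sqrt s ^ (k + 1) * exp (- z / (real k + 2)) \<le> E"
      and E_sum: "E \<le> exp (-z) + (\<Sum>k<N. exp (- z / (real k + 2)) * sqrt s ^ (k + 1))"
    using exists_shot_level[OF z s, of N] by blast
  have E_pos: "0 < E" using E(1) exp_gt_zero[of "-z"] by linarith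
  define y where "y = - ln E"
  have y: "0 \<le> y" "y \<le> z" "exp (-y) = E"
    unfolding y_def using E E_pos ln_ge_iff[OF E_pos, of "-z"] by auto
  then have Rz: "0 \<le> R (z - y)" "R (z - y) \<le> 1" "1 - R (z - y) \<le> Q_fail_bound N (z - y) s"
    using R[of "z - y"] by auto
  have "1 - bomber_a v y * R (z - y) \<le> v * E + Q_fail_bound N (z - y) s"
    using one_minus_a_mult_bounds(3)[OF y(1) Rz(1,2)] Rz(3) y(3) by simp
  also have "\<dots> \<le> v * (exp (-z) + (\<Sum>k<N. exp (- z / (real k + 2)) * sqrt s ^ (k + 1)))
      + ((\<Sum>k<N. 2 * (exp (- z / (real k + 2)) * sqrt s ^ (k + 1))) + 4 * sqrt s ^ (N + 2))"
    using Q_fail_bound_after_shot_le[OF s(1) E_pos E(3)] E_sum v_pos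
    unfolding y_def by (intro add_mono mult_left_mono) auto
  also have "\<dots> = HQ_fail_bound v N z s"
    unfolding HQ_fail_bound_def by (simp add: algebra_simps sum.distrib sum_distrib_left)
  finally show ?thesis using y by auto
qed

end

definition HQ_fail_bound_integral :: "real \<Rightarrow> nat \<Rightarrow> real \<Rightarrow> real \<Rightarrow> real" where
  "HQ_fail_bound_integral v N z t = v * exp (-z) * t
     + (\<Sum>k<N. (v + 2) * exp (- z / (real k + 2)) * (2 / (real (k + 1) + 2) * sqrt t ^ (k + 1 + 2)))
     + 4 * (2 / (real (N + 2) + 2) * sqrt t ^ (N + 2 + 2))"

lemma has_integral_HQ_fail_bound:
  assumes t: "0 \<le> t"
  shows "(HQ_fail_bound v N z has_integral HQ_fail_bound_integral v N z t) {0..t}"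
proof -
  have c: "((\<lambda>s. v * exp (-z)) has_integral v * exp (-z) * t) {0..t}"
    using has_integral_const_real[of "v * exp (-z)" 0 t] t by (simp add: mult.commute)
  have sm: "((\<lambda>s. \<Sum>k<N. (v + 2) * exp (- z / (real k + 2)) * sqrt s ^ (k + 1)) has_integral
      (\<Sum>k<N. (v + 2) * exp (- z / (real k + 2)) * (2 / (real (k + 1) + 2) * sqrt t ^ (k + 1 + 2)))) {0..t}"
    by (intro has_integral_sum has_integral_mult_right has_integral_sqrt_power t) auto
  have tl: "((\<lambda>s. 4 * sqrt s ^ (N + 2)) has_integral 4 * (2 / (real (N + 2) + 2) * sqrt t ^ (N + 2 + 2))) {0..t}"
    by (intro has_integral_mult_right has_integral_sqrt_power t)
  have "((\<lambda>s. v * exp (-z) + (\<Sum>k<N. (v + 2) * exp (- z / (real k + 2)) * sqrt s ^ (k + 1)) + 4 * sqrt s ^ (N + 2))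
     has_integral HQ_fail_bound_integral v N z t) {0..t}"
    unfolding HQ_fail_bound_integral_def by (intro has_integral_add c sm tl)
  then show ?thesis unfolding HQ_fail_bound_def[abs_def] by simp
qed

context bomber
begin

lemma HQ_fail_bound_integral_tail_le:
  assumes t: "0 \<le> t" "t \<le> 1" and z: "0 \<le> z"
  shows "(v + 2) * exp (- z / (real n + 2)) * (2 / (real n + 3) * sqrt t ^ (N + 2))
           + 4 * (2 / (real N + 4) * sqrt t ^ (N + 4)) \<le> 4 * sqrt t ^ (N + 2)"
proof -
  define q where "q = sqrt t ^ (N + 2)"
  have q: "0 \<le> q" unfolding q_def using t by simp
  have "sqrt t ^ (N + 4) = q * sqrt t ^ 2"
  proof -
    have "N + 4 = (N + 2) + 2" by simp
    then show ?thesis unfolding q_def by (simp only: power_add)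
  qed
  also have "\<dots> \<le> q"
    using t q mult_left_le[of "sqrt t ^ 2" q] by simp
  finally have "4 * (2 / (real N + 4) * sqrt t ^ (N + 4)) \<le> 4 * (1 / 2 * q)"
    using q t by (intro mult_left_mono mult_mono) (auto simp: field_simps)
  moreover have "(v + 2) * exp (- z / (real n + 2)) * (2 / (real n + 3) * q)
      = ((v + 2) * (2 / (real n + 3))) * (exp (- z / (real n + 2)) * q)"
    by (simp add: ac_simps)
  moreover have "\<dots> \<le> 2 * (1 * q)"
    using v_pos v_le_one z q by (intro mult_mono) (auto simp: field_simps)
  ultimately show ?thesis unfolding q_def by linarith
qed

lemma HQ_fail_bound_integral_le:
  assumes t: "0 \<le> t" "t \<le> 1" and N: "0 < N" and z: "0 \<le> z"
  shows "HQ_fail_bound_integral v N z t \<le> Q_fail_bound N z t"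
proof -
  obtain n where N: "N = Suc n" using N gr0_conv_Suc by auto
  have "Q_fail_bound N z t = 2 * exp (-z) * t
      + (\<Sum>k<n. 2 * exp (- z / (real k + 2)) * sqrt t ^ (k + 3)) + 4 * sqrt t ^ (N + 2)"
    unfolding Q_fail_bound_def N sum.lessThan_Suc_shift
    using t by (simp add: add.commute numeral_eq_Suc)
  moreover have "HQ_fail_bound_integral v N z t = v * exp (-z) * t
      + (\<Sum>k<n. (v + 2) * exp (- z / (real k + 2)) * (2 / (real k + 3) * sqrt t ^ (k + 3)))
      + ((v + 2) * exp (- z / (real n + 2)) * (2 / (real n + 3) * sqrt t ^ (N + 2))
        + 4 * (2 / (real N + 4) * sqrt t ^ (N + 4)))"
    unfolding HQ_fail_bound_integral_def N by (simp add: add.commute numeral_eq_Suc add.left_commute)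
  moreover have "v * exp (-z) * t \<le> 2 * exp (-z) * t"
    using v_le_one t by (intro mult_right_mono) auto
  moreover have "(\<Sum>k<n. (v + 2) * exp (- z / (real k + 2)) * (2 / (real k + 3) * sqrt t ^ (k + 3)))
       \<le> (\<Sum>k<n. 2 * exp (- z / (real k + 2)) * sqrt t ^ (k + 3))"
  proof (rule sum_mono)
    fix k
    have "(v + 2) * (2 / (real k + 3)) * (exp (- z / (real k + 2)) * sqrt t ^ (k + 3))
        \<le> 2 * (exp (- z / (real k + 2)) * sqrt t ^ (k + 3))"
      using v_le_one t by (intro mult_right_mono) (auto simp: field_simps)
    moreover have "(v + 2) * e * (c * p) = (v + 2) * c * (e * p)" for e c p :: real
      by (simp add: algebra_simps)
    ultimately show "(v + 2) * exp (- z / (real k + 2)) * (2 / (real k + 3) * sqrt t ^ (k + 3))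
       \<le> 2 * exp (- z / (real k + 2)) * sqrt t ^ (k + 3)"
      by (simp only: mult.assoc)
  qed
  ultimately show ?thesis
    using HQ_fail_bound_integral_tail_le[OF t z, of n N] by linarith
qed

lemma Q_failure_upper:
  assumes N: "0 < N"
  shows "\<forall>z t. 0 \<le> z \<longrightarrow> 0 \<le> t \<longrightarrow> t \<le> 1 \<longrightarrow> 1 - bomber_Q v n z t \<le> Q_fail_bound N z t"
proof (induction n)
  case 0
  then show ?case using Q_fail_bound_nonneg by simp
next
  case (Suc n)
  show ?case
  proof (intro allI impI)
    fix z t :: real assume zt: "0 \<le> z" "0 \<le> t" "t \<le> 1"
    have "1 - bomber_Q v (Suc n) z t \<le> integral {0..t} (HQ_fail_bound v N z)"
    proof (rule one_minus_Q_Suc_le[OF zt(1,2)])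
      show "HQ_fail_bound v N z integrable_on {0..t}" using has_integral_HQ_fail_bound[OF zt(2)] by blast
      fix s assume s: "s \<in> {0..t}"
      have "\<exists>y\<in>{0..z}. 1 - bomber_a v y * bomber_Q v n (z - y) s \<le> HQ_fail_bound v N z s"
        using s zt Suc.IH Q_in_unit[where n=n] by (intro exists_shot_fail_le[OF zt(1)]) (auto simp del: bomber_Q.simps)
      then obtain y where y: "y \<in> {0..z}" "1 - bomber_a v y * bomber_Q v n (z - y) s \<le> HQ_fail_bound v N z s" by blast
      have "bomber_a v y * bomber_Q v n (z - y) s \<le> bomber_HQ v n z s" using HQ_ge[OF zt(1) _ y(1)] s by auto
      then show "1 - bomber_HQ v n z s \<le> HQ_fail_bound v N z s" using y by linarith
    qed
    also have "\<dots> = HQ_fail_bound_integral v N z t" using has_integral_HQ_fail_bound[OF zt(2)] by (rule integral_unique)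
    also have "\<dots> \<le> Q_fail_bound N z t" by (rule HQ_fail_bound_integral_le[OF zt(2,3) N zt(1)])
    finally show "1 - bomber_Q v (Suc n) z t \<le> Q_fail_bound N z t" .
  qed
qed

section \<open>The untruncated game\<close>

lemma P_le_Q: "0 \<le> z \<Longrightarrow> 0 \<le> t \<Longrightarrow> bomber_P v z t \<le> bomber_Q v n z t"
  unfolding bomber_P_def using Q_in_unit
  by (intro cINF_lower bdd_belowI2[of _ 0]) (auto simp del: bomber_Q.simps)

lemma P_ge: "(\<And>n. b \<le> bomber_Q v n z t) \<Longrightarrow> b \<le> bomber_P v z t"
  unfolding bomber_P_def by (intro cINF_greatest) auto

lemma P_in_unit: "0 \<le> z \<Longrightarrow> 0 \<le> t \<Longrightarrow> 0 \<le> bomber_P v z t \<and> bomber_P v z t \<le> 1"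
  using P_le_Q[of z t 0] P_ge[of 0 z t] Q_in_unit by auto

lemma P_failure_lower:
  "\<exists>c>0. \<forall>z t. 0 \<le> z \<longrightarrow> 0 \<le> t \<longrightarrow>
     c * exp (-t - z / (real m + 1)) * sqrt t ^ (m + 2) \<le> 1 - bomber_P v z t"
proof -
  obtain c where c: "c > 0" and Q: "\<And>z t. 0 \<le> z \<Longrightarrow> 0 \<le> t \<Longrightarrow>
      c * exp (-t - z / (real m + 1)) * sqrt t ^ (m + 2) \<le> 1 - bomber_Q v (Suc m) z t"
    using Q_failure_lower[of m] by blast
  have "c * exp (-t - z / (real m + 1)) * sqrt t ^ (m + 2) \<le> 1 - bomber_P v z t"
    if "0 \<le> z" "0 \<le> t" for z t
    using Q[OF that] P_le_Q[OF that, of "Suc m"] by linarith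
  with c show ?thesis by blast
qed

lemma P_failure_upper:
  assumes "0 < N" "0 \<le> z" "0 \<le> t" "t \<le> 1"
  shows "1 - bomber_P v z t \<le> Q_fail_bound N z t"
proof -
  have "1 - Q_fail_bound N z t \<le> bomber_Q v n z t" for n
    using Q_failure_upper[OF assms(1), of n, rule_format, OF assms(2-4)] by linarith
  then have "1 - Q_fail_bound N z t \<le> bomber_P v z t" by (rule P_ge)
  then show ?thesis by linarith
qed

lemma H_ge:
  assumes "0 \<le> x" "0 \<le> t" "y \<in> {0..x}"
  shows "bomber_a v y * bomber_P v (x - y) t \<le> bomber_H v x t"
  unfolding bomber_H_def
proof (rule cSUP_upper[OF assms(3)])
  show "bdd_above ((\<lambda>y. bomber_a v y * bomber_P v (x - y) t) ` {0..x})"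
  proof (rule bdd_aboveI2)
    fix y assume "y \<in> {0..x}"
    then show "bomber_a v y * bomber_P v (x - y) t \<le> 1"
      using a_in_unit[of y] P_in_unit[of "x - y" t] assms(2) by (auto intro: mult_le_one)
  qed
qed

lemma H_le:
  "0 \<le> x \<Longrightarrow> (\<And>y. y \<in> {0..x} \<Longrightarrow> bomber_a v y * bomber_P v (x - y) t \<le> b) \<Longrightarrow> bomber_H v x t \<le> b"
  unfolding bomber_H_def by (intro cSUP_least) auto

lemma H_failure_upper:
  assumes N: "0 < N" and x: "0 \<le> x" and t: "0 \<le> t" "t \<le> 1"
  shows "1 - bomber_H v x t \<le> HQ_fail_bound v N x t"
proof -
  have "\<exists>y\<in>{0..x}. 1 - bomber_a v y * bomber_P v (x - y) t \<le> HQ_fail_bound v N x t"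
    using P_in_unit P_failure_upper[OF N] t by (intro exists_shot_fail_le[OF x t]) auto
  then obtain y where "y \<in> {0..x}" "1 - bomber_a v y * bomber_P v (x - y) t \<le> HQ_fail_bound v N x t"
    by blast
  then show ?thesis using H_ge[OF x t(1)] by fastforce
qed

lemma H_failure_ge_now: "0 \<le> x \<Longrightarrow> 0 \<le> t \<Longrightarrow> v * exp (-x) \<le> 1 - bomber_H v x t"
proof -
  assume xt: "0 \<le> x" "0 \<le> t"
  have "bomber_H v x t \<le> 1 - v * exp (-x)"
  proof (rule H_le[OF xt(1)])
    fix y assume y: "y \<in> {0..x}"
    have "v * exp (-y) \<le> 1 - bomber_a v y * bomber_P v (x - y) t"
      using one_minus_a_mult_bounds(1) P_in_unit[of "x - y" t] y xt by auto
    moreover have "v * exp (-x) \<le> v * exp (-y)" using y v_pos by auto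
    ultimately show "bomber_a v y * bomber_P v (x - y) t \<le> 1 - v * exp (-x)" by linarith
  qed
  then show ?thesis by simp
qed

lemma H_failure_lower:
  "\<exists>C>0. \<forall>x t. 0 \<le> x \<longrightarrow> 0 \<le> t \<longrightarrow>
     C * exp (-t - x / (real m + 2)) * sqrt t ^ (m + 1) \<le> 1 - bomber_H v x t"
proof -
  obtain c where c: "c > 0" and later: "\<And>z t. 0 \<le> z \<Longrightarrow> 0 \<le> t \<Longrightarrow>
      c * exp (-t - z / (real m + 1)) * sqrt t ^ (m + 2) \<le> 1 - bomber_P v z t"
    using P_failure_lower[of m] by blast
  show ?thesis
    unfolding bomber_H_def using c later P_in_unit
    by (intro exI[of _ "exp ((ln v + (real m + 1) * ln c) / (real m + 2))"] conjI allI impI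
        SUP_shot_failure_ge) auto
qed

end

section \<open>Asymptotics as t tends to 0\<close>

lemma real_choose_two: "real (n choose 2) = real n * (real n - 1) / 2"
proof -
  have "even (n * (n - 1))" by (cases "even n") auto
  then have "real (n * (n - 1) div 2) = real (n * (n - 1)) / 2"
    by (simp add: real_of_nat_div)
  moreover have "real (n * (n - 1)) = real n * (real n - 1)"
    by (cases n) (auto simp: algebra_simps)
  ultimately show ?thesis by (simp add: choose_two)
qed

lemma exp_neg_mult_antimono: "0 \<le> (x::real) \<Longrightarrow> B \<le> A \<Longrightarrow> exp (-x * A) \<le> exp (-x * B)"
  by (simp add: mult_left_mono)

lemma sqrt_power_exp_bounds:
  fixes t x a \<rho> \<delta> :: real
  assumes t: "0 < t" and x: "0 < x" and d: "\<bar>(- ln t) / x - \<rho>\<bar> \<le> \<delta>"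
  shows "exp (-x * a) * sqrt t ^ n \<le> exp (-x * (a + real n * \<rho> / 2 - real n * \<delta> / 2))"
    and "exp (-x * (a + real n * \<rho> / 2 + real n * \<delta> / 2)) \<le> exp (-x * a) * sqrt t ^ n"
proof -
  define r where "r = (- ln t) / x"
  have lt: "ln t = - (x * r)" unfolding r_def using x by simp
  have sp0: "sqrt t ^ n = exp (real n * ln (sqrt t))" using t by (simp add: exp_of_nat_mult)
  have "ln (sqrt t) = ln t / 2" using t by (simp add: ln_sqrt)
  with sp0 have sp: "sqrt t ^ n = exp (real n * (ln t / 2))" by simp
  have eq: "exp (-x * a) * sqrt t ^ n = exp (-x * (a + real n * r / 2))"
    unfolding sp lt by (simp add: exp_add[symmetric] algebra_simps)
  have r: "\<rho> - \<delta> \<le> r" "r \<le> \<rho> + \<delta>" using d unfolding r_def by auto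
  have "real n * (\<rho> - \<delta>) \<le> real n * r" using r by (intro mult_left_mono) auto
  then show "exp (-x * a) * sqrt t ^ n \<le> exp (-x * (a + real n * \<rho> / 2 - real n * \<delta> / 2))"
    unfolding eq using x by (intro exp_neg_mult_antimono) (auto simp: algebra_simps)
  have "real n * r \<le> real n * (\<rho> + \<delta>)" using r by (intro mult_left_mono) auto
  then show "exp (-x * (a + real n * \<rho> / 2 + real n * \<delta> / 2)) \<le> exp (-x * a) * sqrt t ^ n"
    unfolding eq using x by (intro exp_neg_mult_antimono) (auto simp: algebra_simps)
qed

lemma eventually_mult_exp_le_exp:
  fixes x :: "'a \<Rightarrow> real" and C a \<epsilon> :: real
  assumes x: "filterlim x at_top F" and e: "0 < \<epsilon>"
  shows "\<forall>\<^sub>F t in F. C * exp (- x t * a) \<le> exp (- x t * (a - \<epsilon>))"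
proof -
  have "\<forall>\<^sub>F t in F. max 0 (ln (max C 1) / \<epsilon>) \<le> x t" using x filterlim_at_top by blast
  then show ?thesis
  proof (rule eventually_mono)
    fix t assume h: "max 0 (ln (max C 1) / \<epsilon>) \<le> x t"
    have "ln (max C 1) \<le> x t * \<epsilon>" using h e by (simp add: field_simps)
    then have "max C 1 \<le> exp (x t * \<epsilon>)"
      by (metis exp_le_cancel_iff exp_ln max.strict_coboundedI2 zero_less_one)
    then have "C \<le> exp (x t * \<epsilon>)" by simp
    then have "C * exp (- x t * a) \<le> exp (x t * \<epsilon>) * exp (- x t * a)"
      by (intro mult_right_mono) auto
    also have "\<dots> = exp (- x t * (a - \<epsilon>))" by (simp add: exp_add[symmetric] algebra_simps)
    finally show "C * exp (- x t * a) \<le> exp (- x t * (a - \<epsilon>))" .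
  qed
qed

lemma eventually_exp_le_mult_exp:
  fixes x :: "'a \<Rightarrow> real" and C a \<epsilon> :: real
  assumes x: "filterlim x at_top F" and e: "0 < \<epsilon>" and C: "0 < C"
  shows "\<forall>\<^sub>F t in F. exp (- x t * (a + \<epsilon>)) \<le> C * exp (- x t * a)"
proof -
  have "\<forall>\<^sub>F t in F. max 0 (- ln C / \<epsilon>) \<le> x t" using x filterlim_at_top by blast
  then show ?thesis
  proof (rule eventually_mono)
    fix t assume h: "max 0 (- ln C / \<epsilon>) \<le> x t"
    have "- ln C \<le> x t * \<epsilon>" using h e by (simp add: field_simps)
    then have "exp (- (x t * \<epsilon>)) \<le> C" using C by (metis exp_le_cancel_iff exp_ln minus_le_iff)
    then have "exp (- (x t * \<epsilon>)) * exp (- x t * a) \<le> C * exp (- x t * a)"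
      by (intro mult_right_mono) auto
    moreover have "exp (- (x t * \<epsilon>)) * exp (- x t * a) = exp (- x t * (a + \<epsilon>))"
      by (simp add: exp_add[symmetric] algebra_simps)
    ultimately show "exp (- x t * (a + \<epsilon>)) \<le> C * exp (- x t * a)" by linarith
  qed
qed

lemma tendsto_abs_ln_div_of_exp_bounds:
  fixes x f :: "'a \<Rightarrow> real" and c :: real
  assumes c: "0 < c" and x: "\<forall>\<^sub>F t in F. 0 < x t"
    and up: "\<And>\<epsilon>. 0 < \<epsilon> \<Longrightarrow> \<forall>\<^sub>F t in F. f t \<le> exp (- x t * (c - \<epsilon>))"
    and lo: "\<And>\<epsilon>. 0 < \<epsilon> \<Longrightarrow> \<forall>\<^sub>F t in F. exp (- x t * (c + \<epsilon>)) \<le> f t"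
  shows "((\<lambda>t. \<bar>ln (f t)\<bar> / x t) \<longlongrightarrow> c) F"
  unfolding tendsto_iff
proof (intro allI impI)
  fix e :: real assume e: "0 < e"
  define \<epsilon> where "\<epsilon> = min (e / 2) (c / 2)"
  have ep: "0 < \<epsilon>" "\<epsilon> < e" "\<epsilon> \<le> c / 2" unfolding \<epsilon>_def using e c by auto
  show "\<forall>\<^sub>F t in F. dist (\<bar>ln (f t)\<bar> / x t) c < e"
    using x up[OF ep(1)] lo[OF ep(1)]
  proof (eventually_elim)
    case (elim t)
    have fp: "0 < f t" using elim(3) by (smt (verit) exp_gt_zero)
    have l1: "ln (f t) \<le> - x t * (c - \<epsilon>)" using elim(2) fp by (metis ln_exp ln_le_cancel_iff exp_gt_zero)
    have l2: "- x t * (c + \<epsilon>) \<le> ln (f t)" using elim(3) fp by (metis ln_exp ln_le_cancel_iff exp_gt_zero)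
    have "x t * (c - \<epsilon>) > 0" using elim(1) ep by simp
    then have neg: "ln (f t) < 0" using l1 by linarith
    have "c - \<epsilon> \<le> - ln (f t) / x t" using l1 elim(1) by (simp add: field_simps)
    moreover have "- ln (f t) / x t \<le> c + \<epsilon>" using l2 elim(1) by (simp add: field_simps)
    ultimately show ?case using neg ep by (simp add: dist_real_def abs_if)
  qed
qed

lemma threshold_index_minimises:
  fixes \<rho> :: real and j m :: nat
  assumes j: "1 \<le> j" and m: "1 \<le> m" and lower: "2 / (real j * (real j + 1)) \<le> \<rho>"
    and upper: "j = 1 \<or> \<rho> < 2 / (real j * (real j - 1))"
  shows "1 / real j + \<rho> * (real j + 1) / 2 \<le> 1 / real m + \<rho> * (real m + 1) / 2"
proof -
  have jm: "1 \<le> real j" "1 \<le> real m" using j m by auto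
  have diff: "(1 / real m + \<rho> * (real m + 1) / 2) - (1 / real j + \<rho> * (real j + 1) / 2)
      = (real m - real j) * (\<rho> / 2 - 1 / (real m * real j))"
    using jm by (simp add: field_simps)
  have "0 \<le> (real m - real j) * (\<rho> / 2 - 1 / (real m * real j))"
  proof (cases "j < m")
    case True
    then have "real j * (real j + 1) \<le> real m * real j" using jm by simp
    then have "1 / (real m * real j) \<le> 1 / (real j * (real j + 1))"
      using jm by (intro divide_left_mono) auto
    also have "\<dots> \<le> \<rho> / 2" using lower by (simp add: field_simps)
    finally show ?thesis using True by simp
  next
    case False
    show ?thesis
    proof (cases "m = j")
      case False
      with \<open>\<not> j < m\<close> have "real m \<le> real j - 1" "j \<noteq> 1" using m by auto
      then have "real m * real j \<le> real j * (real j - 1)" "0 < real j * (real j - 1)"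
        using jm by (auto simp: mult.commute intro: mult_right_mono)
      then have "1 / (real j * (real j - 1)) \<le> 1 / (real m * real j)"
        using jm by (intro divide_left_mono) auto
      moreover have "\<rho> / 2 < 1 / (real j * (real j - 1))"
        using upper \<open>j \<noteq> 1\<close> \<open>0 < real j * (real j - 1)\<close> by (simp add: field_simps)
      ultimately show ?thesis
        using \<open>real m \<le> real j - 1\<close> by (intro mult_nonpos_nonpos) auto
    qed simp
  qed
  with diff show ?thesis by linarith
qed

lemma ratio_le_of_exp_bound:
  fixes X k q c a b \<eta> :: real
  assumes X: "0 < X" and q: "0 < q" and c: "0 < c"
    and bound: "c * exp ((k - X) / q - X * a) \<le> exp (- X * b)"
    and \<eta>: "- ln c \<le> \<eta> * X"
  shows "k / X \<le> 1 - q * (b - a - \<eta>)"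
proof -
  have "ln (c * exp ((k - X) / q - X * a)) \<le> ln (exp (- X * b))"
    using bound c by (subst ln_le_cancel_iff) auto
  then have "ln c + (k - X) / q - X * a \<le> - X * b"
    using c by (simp add: ln_mult)
  then have "q * ln c + (k - X) - q * (X * a) \<le> - q * (X * b)"
    using q by (simp add: field_simps)
  moreover have "q * (- ln c) \<le> q * (\<eta> * X)"
    using \<eta> q by (intro mult_left_mono) auto
  ultimately have "k \<le> X * (1 - q * (b - a - \<eta>))"
    by (simp add: algebra_simps)
  then show ?thesis
    using X by (simp add: pos_divide_le_eq mult.commute)
qed

locale bomber_regime = bomber +
  fixes \<rho> :: real and j :: nat and x :: "real \<Rightarrow> real"
  assumes rho_pos: "0 < \<rho>"
    and x_pos: "\<forall>\<^sub>F t in at_right 0. 0 < x t"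
    and x_rate: "((\<lambda>t. \<bar>ln t\<bar> / x t) \<longlongrightarrow> \<rho>) (at_right 0)"
    and j_ge_1: "1 \<le> j"
    and rho_ge: "1 / real ((j + 1) choose 2) \<le> \<rho>"
    and rho_less: "j = 1 \<or> \<rho> < 1 / real (j choose 2)"
begin

lemma eventually_rate_near:
  assumes "0 < \<delta>"
  shows "\<forall>\<^sub>F t in at_right 0. 0 < t \<and> t < 1 \<and> 0 < x t \<and> \<bar>(- ln t) / x t - \<rho>\<bar> \<le> \<delta>"
proof -
  have "\<forall>\<^sub>F t in at_right 0. dist (\<bar>ln t\<bar> / x t) \<rho> < \<delta>"
    using x_rate assms unfolding tendsto_iff by blast
  moreover have "\<forall>\<^sub>F t in at_right (0::real). 0 < t \<and> t < 1"
    unfolding eventually_at_right_field by (intro exI[of _ 1]) auto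
  ultimately show ?thesis using x_pos
    by eventually_elim (auto simp: dist_real_def)
qed

lemma filterlim_x_at_top: "filterlim x at_top (at_right 0)"
  unfolding filterlim_at_top
proof
  fix Z :: real
  have "\<forall>\<^sub>F t in at_right 0. ln t \<le> - (2 * \<rho> * max Z 0)"
    using ln_at_0 filterlim_at_bot by blast
  then show "\<forall>\<^sub>F t in at_right 0. Z \<le> x t"
    using eventually_rate_near[OF rho_pos]
  proof eventually_elim
    case (elim t)
    then have "(- ln t) / x t \<le> 2 * \<rho>" by auto
    with elim have "- ln t \<le> 2 * \<rho> * x t" by (simp add: field_simps)
    with elim(1) have "2 * \<rho> * max Z 0 \<le> 2 * \<rho> * x t" by linarith
    then show ?case using rho_pos by simp
  qed
qed

lemma rate_P_le: "1 \<le> m \<Longrightarrow> 1 / real j + \<rho> * (real j + 1) / 2 \<le> 1 / real m + \<rho> * (real m + 1) / 2"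
proof (rule threshold_index_minimises[OF j_ge_1])
  show "2 / (real j * (real j + 1)) \<le> \<rho>"
  proof -
    have "real ((j + 1) choose 2) = real j * (real j + 1) / 2"
      using real_choose_two[of "j + 1"] by (simp add: algebra_simps)
    with rho_ge show ?thesis by (simp only:) simp
  qed
  show "j = 1 \<or> \<rho> < 2 / (real j * (real j - 1))"
    using rho_less real_choose_two[of j] by (simp add: field_simps)
qed

lemma rate_H_le_1: "1 / real j + \<rho> * (real j - 1) / 2 \<le> 1"
  using rate_P_le[of 1] by (simp add: field_simps)

text \<open>For such N the last term t^((N+2)/2) of the failure bounds is negligible.\<close>
lemma exists_tail_index: "\<exists>N>0. 1 / real j + \<rho> * (real j + 1) / 2 \<le> real (N + 2) * \<rho> / 2"
proof -
  define N where "N = Suc (nat \<lceil>2 * (1 / real j + \<rho> * (real j + 1) / 2) / \<rho>\<rceil>)"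
  have "2 * (1 / real j + \<rho> * (real j + 1) / 2) / \<rho> \<le> real (N + 2)"
    unfolding N_def by linarith
  then have "1 / real j + \<rho> * (real j + 1) / 2 \<le> real (N + 2) * \<rho> / 2"
    using rho_pos by (simp add: field_simps)
  then show ?thesis unfolding N_def by blast
qed

lemma Q_fail_bound_le_exp_rate:
  assumes t: "0 < t" and X: "0 < X" and near: "\<bar>(- ln t) / X - \<rho>\<bar> \<le> \<delta>" and "0 < \<delta>"
    and N: "1 / real j + \<rho> * (real j + 1) / 2 \<le> real (N + 2) * \<rho> / 2"
    and \<epsilon>: "(real N + 2) * \<delta> = \<epsilon>"
  shows "Q_fail_bound N X t \<le> real (2 * N + 4) * exp (- X * (1 / real j + \<rho> * (real j + 1) / 2 - \<epsilon> / 2))"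
proof -
  define E where "E = exp (- X * (1 / real j + \<rho> * (real j + 1) / 2 - \<epsilon> / 2))"
  have "(\<Sum>k<N. 2 * exp (- X / (real k + 1)) * sqrt t ^ (k + 2)) \<le> real (card {..<N}) * (2 * E)"
  proof (rule sum_bounded_above)
    fix k assume k: "k \<in> {..<N}"
    have "exp (- X * (1 / (real k + 1))) * sqrt t ^ (k + 2)
        \<le> exp (- X * (1 / (real k + 1) + real (k + 2) * \<rho> / 2 - real (k + 2) * \<delta> / 2))"
      by (rule sqrt_power_exp_bounds(1)[OF t X near])
    also have "\<dots> \<le> E" unfolding E_def
    proof (rule exp_neg_mult_antimono)
      have "real (k + 2) * \<delta> \<le> (real N + 2) * \<delta>" using k \<open>0 < \<delta>\<close> by (intro mult_right_mono) auto
      then show "1 / real j + \<rho> * (real j + 1) / 2 - \<epsilon> / 2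
          \<le> 1 / (real k + 1) + real (k + 2) * \<rho> / 2 - real (k + 2) * \<delta> / 2"
        using rate_P_le[of "k + 1"] \<epsilon> by (simp add: algebra_simps add_divide_distrib)
    qed (use X in simp)
    finally show "2 * exp (- X / (real k + 1)) * sqrt t ^ (k + 2) \<le> 2 * E" by simp
  qed
  moreover have "exp (- X * 0) * sqrt t ^ (N + 2)
      \<le> exp (- X * (0 + real (N + 2) * \<rho> / 2 - real (N + 2) * \<delta> / 2))"
    by (rule sqrt_power_exp_bounds(1)[OF t X near])
  moreover have "\<dots> \<le> E"
    unfolding E_def using N \<epsilon> X by (intro exp_neg_mult_antimono) (auto simp: algebra_simps)
  ultimately show ?thesis
    unfolding Q_fail_bound_def E_def[symmetric] by (simp add: algebra_simps)
qed

lemma HQ_fail_bound_le_exp_rate: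
  assumes t: "0 < t" and X: "0 < X" and near: "\<bar>(- ln t) / X - \<rho>\<bar> \<le> \<delta>" and "0 < \<delta>"
    and N: "1 / real j + \<rho> * (real j + 1) / 2 \<le> real (N + 2) * \<rho> / 2"
    and \<epsilon>: "(real N + 2) * \<delta> = \<epsilon>" "0 < \<epsilon>"
  shows "HQ_fail_bound v N X t \<le> real (3 * N + 5) * exp (- X * (1 / real j + \<rho> * (real j - 1) / 2 - \<epsilon> / 2))"
proof -
  define E where "E = exp (- X * (1 / real j + \<rho> * (real j - 1) / 2 - \<epsilon> / 2))"
  have rate_H: "1 / real j + \<rho> * (real j - 1) / 2 = 1 / real j + \<rho> * (real j + 1) / 2 - \<rho>"
    by (simp add: field_simps)
  have "exp (- X * 1) \<le> E"
    unfolding E_def using rate_H_le_1 \<epsilon>(2) X by (intro exp_neg_mult_antimono) auto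
  then have "v * exp (- X) \<le> E"
    using v_pos v_le_one by (smt (verit) exp_gt_zero mult_left_le_one_le mult_minus1_right)
  moreover have "(\<Sum>k<N. (v + 2) * exp (- X / (real k + 2)) * sqrt t ^ (k + 1)) \<le> real (card {..<N}) * (3 * E)"
  proof (rule sum_bounded_above)
    fix k assume k: "k \<in> {..<N}"
    have "exp (- X * (1 / (real k + 2))) * sqrt t ^ (k + 1)
        \<le> exp (- X * (1 / (real k + 2) + real (k + 1) * \<rho> / 2 - real (k + 1) * \<delta> / 2))"
      by (rule sqrt_power_exp_bounds(1)[OF t X near])
    also have "\<dots> \<le> E" unfolding E_def
    proof (rule exp_neg_mult_antimono)
      have "real (k + 1) * \<delta> \<le> (real N + 2) * \<delta>" using k \<open>0 < \<delta>\<close> by (intro mult_right_mono) auto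
      then show "1 / real j + \<rho> * (real j - 1) / 2 - \<epsilon> / 2
          \<le> 1 / (real k + 2) + real (k + 1) * \<rho> / 2 - real (k + 1) * \<delta> / 2"
        using rate_P_le[of "k + 2"] \<epsilon> unfolding rate_H by (simp add: algebra_simps add_divide_distrib)
    qed (use X in simp)
    finally have "exp (- X / (real k + 2)) * sqrt t ^ (k + 1) \<le> E" by simp
    then show "(v + 2) * exp (- X / (real k + 2)) * sqrt t ^ (k + 1) \<le> 3 * E"
      using v_le_one t by (simp add: mult.assoc mult_mono)
  qed
  moreover have "exp (- X * 0) * sqrt t ^ (N + 2)
      \<le> exp (- X * (0 + real (N + 2) * \<rho> / 2 - real (N + 2) * \<delta> / 2))"
    by (rule sqrt_power_exp_bounds(1)[OF t X near])
  moreover have "\<dots> \<le> E"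
  proof -
    have "1 / real j + \<rho> * (real j - 1) / 2 \<le> real (N + 2) * \<rho> / 2"
      using N rate_H rho_pos by linarith
    then show ?thesis
      unfolding E_def using \<epsilon> X by (intro exp_neg_mult_antimono) (auto simp: algebra_simps)
  qed
  ultimately show ?thesis
    unfolding HQ_fail_bound_def E_def[symmetric] by (simp add: algebra_simps)
qed

lemma P_failure_eventually_le:
  assumes "0 < \<epsilon>"
  shows "\<forall>\<^sub>F t in at_right 0.
    1 - bomber_P v (x t) t \<le> exp (- x t * (1 / real j + \<rho> * (real j + 1) / 2 - \<epsilon>))"
proof -
  define c where "c = 1 / real j + \<rho> * (real j + 1) / 2"
  obtain N where N: "0 < N" "c \<le> real (N + 2) * \<rho> / 2"
    using exists_tail_index unfolding c_def by blast
  define \<delta> where "\<delta> = \<epsilon> / (real N + 2)"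
  have \<delta>: "0 < \<delta>" "(real N + 2) * \<delta> = \<epsilon>" unfolding \<delta>_def using assms by auto
  have "\<forall>\<^sub>F t in at_right 0. real (2 * N + 4) * exp (- x t * (c - \<epsilon> / 2)) \<le> exp (- x t * (c - \<epsilon> / 2 - \<epsilon> / 2))"
    by (rule eventually_mult_exp_le_exp[OF filterlim_x_at_top]) (use assms in simp)
  then show ?thesis
    using eventually_rate_near[OF \<delta>(1)] unfolding c_def[symmetric]
  proof eventually_elim
    case (elim t)
    then have "1 - bomber_P v (x t) t \<le> Q_fail_bound N (x t) t"
      using P_failure_upper N by auto
    also have "\<dots> \<le> real (2 * N + 4) * exp (- x t * (c - \<epsilon> / 2))"
      using elim N \<delta> unfolding c_def by (intro Q_fail_bound_le_exp_rate) auto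
    finally show ?case using elim by simp
  qed
qed

lemma P_failure_eventually_ge:
  assumes "0 < \<epsilon>"
  shows "\<forall>\<^sub>F t in at_right 0.
    exp (- x t * (1 / real j + \<rho> * (real j + 1) / 2 + \<epsilon>)) \<le> 1 - bomber_P v (x t) t"
proof -
  define c where "c = 1 / real j + \<rho> * (real j + 1) / 2"
  obtain C where C: "C > 0" and fail: "\<And>z t. 0 \<le> z \<Longrightarrow> 0 \<le> t \<Longrightarrow>
      C * exp (-t - z / real j) * sqrt t ^ (j + 1) \<le> 1 - bomber_P v z t"
  proof -
    have "real (j - 1) + 1 = real j" "j - 1 + 2 = j + 1" using j_ge_1 by auto
    then show ?thesis using P_failure_lower[of "j - 1"] that by auto
  qed
  define \<delta> where "\<delta> = \<epsilon> / real (j + 1)"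
  have \<delta>: "0 < \<delta>" "real (j + 1) * \<delta> = \<epsilon>" unfolding \<delta>_def using assms by auto
  have "\<forall>\<^sub>F t in at_right 0. exp (- x t * (c + \<epsilon> / 2 + \<epsilon> / 2)) \<le> (C * exp (-1)) * exp (- x t * (c + \<epsilon> / 2))"
    by (rule eventually_exp_le_mult_exp[OF filterlim_x_at_top]) (use assms C in simp_all)
  then show ?thesis
    using eventually_rate_near[OF \<delta>(1)] unfolding c_def[symmetric]
  proof eventually_elim
    case (elim t)
    have "exp (- x t * (c + \<epsilon> / 2)) = exp (- x t * (1 / real j + real (j + 1) * \<rho> / 2 + real (j + 1) * \<delta> / 2))"
      unfolding c_def using \<delta> by (simp add: algebra_simps)
    also have "\<dots> \<le> exp (- x t * (1 / real j)) * sqrt t ^ (j + 1)"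
      using elim by (intro sqrt_power_exp_bounds(2)) auto
    finally have "(C * exp (-1)) * exp (- x t * (c + \<epsilon> / 2))
        \<le> (C * exp (- t)) * (exp (- x t * (1 / real j)) * sqrt t ^ (j + 1))"
      using C elim by (intro mult_mono) auto
    also have "\<dots> = C * exp (- t - x t / real j) * sqrt t ^ (j + 1)"
      by (simp add: exp_diff exp_minus field_simps)
    also have "\<dots> \<le> 1 - bomber_P v (x t) t"
      using fail elim by simp
    finally show ?case using elim by (simp add: ac_simps)
  qed
qed

lemma H_failure_eventually_le:
  assumes "0 < \<epsilon>"
  shows "\<forall>\<^sub>F t in at_right 0.
    1 - bomber_H v (x t) t \<le> exp (- x t * (1 / real j + \<rho> * (real j - 1) / 2 - \<epsilon>))"
proof -
  define c where "c = 1 / real j + \<rho> * (real j - 1) / 2"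
  obtain N where N: "0 < N" "1 / real j + \<rho> * (real j + 1) / 2 \<le> real (N + 2) * \<rho> / 2"
    using exists_tail_index by blast
  define \<delta> where "\<delta> = \<epsilon> / (real N + 2)"
  have \<delta>: "0 < \<delta>" "(real N + 2) * \<delta> = \<epsilon>" unfolding \<delta>_def using assms by auto
  have "\<forall>\<^sub>F t in at_right 0. real (3 * N + 5) * exp (- x t * (c - \<epsilon> / 2)) \<le> exp (- x t * (c - \<epsilon> / 2 - \<epsilon> / 2))"
    by (rule eventually_mult_exp_le_exp[OF filterlim_x_at_top]) (use assms in simp)
  then show ?thesis
    using eventually_rate_near[OF \<delta>(1)] unfolding c_def[symmetric]
  proof eventually_elim
    case (elim t)
    then have "1 - bomber_H v (x t) t \<le> HQ_fail_bound v N (x t) t"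
      using H_failure_upper N by auto
    also have "\<dots> \<le> real (3 * N + 5) * exp (- x t * (c - \<epsilon> / 2))"
      using elim N \<delta> assms unfolding c_def by (intro HQ_fail_bound_le_exp_rate) auto
    finally show ?case using elim by simp
  qed
qed

lemma H_failure_eventually_ge:
  assumes "0 < \<epsilon>"
  shows "\<forall>\<^sub>F t in at_right 0.
    exp (- x t * (1 / real j + \<rho> * (real j - 1) / 2 + \<epsilon>)) \<le> 1 - bomber_H v (x t) t"
proof (cases "j = 1")
  case True
  have "\<forall>\<^sub>F t in at_right 0. exp (- x t * (1 + \<epsilon>)) \<le> v * exp (- x t * 1)"
    by (rule eventually_exp_le_mult_exp[OF filterlim_x_at_top assms v_pos])
  then show ?thesis using eventually_rate_near[OF assms]
  proof eventually_elim
    case (elim t)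
    then show ?case using H_failure_ge_now[of "x t" t] True by simp
  qed
next
  case False
  define c where "c = 1 / real j + \<rho> * (real j - 1) / 2"
  obtain C where C: "C > 0" and fail: "\<And>z t. 0 \<le> z \<Longrightarrow> 0 \<le> t \<Longrightarrow>
      C * exp (-t - z / real j) * sqrt t ^ (j - 1) \<le> 1 - bomber_H v z t"
  proof -
    have "real (j - 2) + 2 = real j" "j - 2 + 1 = j - 1" using j_ge_1 False by auto
    then show ?thesis using H_failure_lower[of "j - 2"] that by auto
  qed
  define \<delta> where "\<delta> = \<epsilon> / real j"
  have \<delta>: "0 < \<delta>" "real (j - 1) * \<delta> \<le> \<epsilon>"
    unfolding \<delta>_def using assms j_ge_1 by (auto simp: field_simps)
  have "\<forall>\<^sub>F t in at_right 0. exp (- x t * (c + \<epsilon> / 2 + \<epsilon> / 2)) \<le> (C * exp (-1)) * exp (- x t * (c + \<epsilon> / 2))"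
    by (rule eventually_exp_le_mult_exp[OF filterlim_x_at_top]) (use assms C in simp_all)
  then show ?thesis
    using eventually_rate_near[OF \<delta>(1)] unfolding c_def[symmetric]
  proof eventually_elim
    case (elim t)
    have "exp (- x t * (c + \<epsilon> / 2)) \<le> exp (- x t * (1 / real j + real (j - 1) * \<rho> / 2 + real (j - 1) * \<delta> / 2))"
      unfolding c_def using \<delta> elim j_ge_1 by (intro exp_neg_mult_antimono) (auto simp: algebra_simps of_nat_diff)
    also have "\<dots> \<le> exp (- x t * (1 / real j)) * sqrt t ^ (j - 1)"
      using elim by (intro sqrt_power_exp_bounds(2)) auto
    finally have "(C * exp (-1)) * exp (- x t * (c + \<epsilon> / 2))
        \<le> (C * exp (- t)) * (exp (- x t * (1 / real j)) * sqrt t ^ (j - 1))"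
      using C elim by (intro mult_mono) auto
    also have "\<dots> = C * exp (- t - x t / real j) * sqrt t ^ (j - 1)"
      by (simp add: exp_diff exp_minus field_simps)
    also have "\<dots> \<le> 1 - bomber_H v (x t) t"
      using fail elim by simp
    finally show ?case using elim by (simp add: ac_simps)
  qed
qed

lemma K_ratio_eventually_gt:
  assumes K: "\<forall>\<^sub>F t in at_right 0. 0 \<le> K t \<and> K t \<le> x t \<and>
      bomber_a v (K t) * bomber_P v (x t - K t) t = bomber_H v (x t) t"
    and e: "0 < e"
  shows "\<forall>\<^sub>F t in at_right 0. 1 / real j + \<rho> * (real j - 1) / 2 - e < K t / x t"
proof -
  define c where "c = 1 / real j + \<rho> * (real j - 1) / 2"
  have e4: "0 < e / 4" using e by simp
  have "\<forall>\<^sub>F t in at_right 0. - ln v / (e / 4) \<le> x t"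
    using filterlim_x_at_top filterlim_at_top by blast
  then show ?thesis
    using H_failure_eventually_le[OF e4] eventually_rate_near[OF e4] K
    unfolding c_def[symmetric]
  proof eventually_elim
    case (elim t)
    then have R: "0 \<le> bomber_P v (x t - K t) t" "bomber_P v (x t - K t) t \<le> 1"
      using P_in_unit[of "x t - K t" t] by auto
    have "v * exp (- K t) \<le> 1 - bomber_a v (K t) * bomber_P v (x t - K t) t"
      using elim by (intro one_minus_a_mult_bounds(1)[OF _ R]) auto
    also have "\<dots> = 1 - bomber_H v (x t) t"
      using elim by simp
    also have "\<dots> \<le> exp (- x t * (c - e / 4))"
      using elim by simp
    finally have "ln (v * exp (- K t)) \<le> ln (exp (- x t * (c - e / 4)))"
      using v_pos by (subst ln_le_cancel_iff) auto
    then have "ln v - K t \<le> - x t * (c - e / 4)"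
      using v_pos by (simp add: ln_mult)
    moreover have "- ln v \<le> e / 4 * x t"
      using elim e by (simp add: field_simps)
    ultimately have "x t * (c - e / 2) \<le> K t"
      by (simp add: algebra_simps)
    then have "c - e / 2 \<le> K t / x t"
      using elim by (simp add: field_simps)
    then show ?case
      using e by linarith
  qed
qed

text \<open>If the bomber fired k out of X, the ammunition X - k left for the remaining j - 1
  encounters makes the failure probability of P, which is at most that of H, too large
  unless k / X is small.\<close>
lemma shot_ratio_le:
  assumes C: "0 < C" and q: "0 < q"
    and fail: "\<And>z. 0 \<le> z \<Longrightarrow> C * exp (-t - z / q) * sqrt t ^ j \<le> 1 - bomber_P v z t"
    and t: "0 < t" "t < 1" and X: "0 < X" and near: "\<bar>(- ln t) / X - \<rho>\<bar> \<le> \<delta>"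
    and k: "0 \<le> k" "k \<le> X" and shot: "bomber_a v k * bomber_P v (X - k) t = bomber_H v X t"
    and H: "1 - bomber_H v X t \<le> exp (- X * b)" and \<eta>: "- ln (C * exp (-1)) \<le> \<eta> * X"
  shows "k / X \<le> 1 - q * (b - (real j * \<rho> / 2 + real j * \<delta> / 2) - \<eta>)"
proof (rule ratio_le_of_exp_bound[OF X q _ _ \<eta>])
  have R: "0 \<le> bomber_P v (X - k) t" "bomber_P v (X - k) t \<le> 1"
    using P_in_unit[of "X - k" t] k t by auto
  have P: "1 - bomber_P v (X - k) t \<le> exp (- X * b)"
    using one_minus_a_mult_bounds(2)[OF k(1) R] shot H by simp
  have "exp (- X * (0 + real j * \<rho> / 2 + real j * \<delta> / 2)) \<le> exp (- X * 0) * sqrt t ^ j"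
    by (rule sqrt_power_exp_bounds(2)[OF t(1) X near])
  then have "C * exp (-1) * exp ((k - X) / q) * exp (- X * (real j * \<rho> / 2 + real j * \<delta> / 2))
      \<le> C * exp (-t) * exp ((k - X) / q) * sqrt t ^ j"
    using C t by (intro mult_mono) auto
  also have "\<dots> = C * exp (-t - (X - k) / q) * sqrt t ^ j"
  proof -
    have "-t - (X - k) / q = -t + (k - X) / q"
      by (simp add: diff_divide_distrib)
    then show ?thesis by (simp only: exp_add mult.assoc)
  qed
  also have "\<dots> \<le> exp (- X * b)"
    using fail[of "X - k"] k P by linarith
  finally show "C * exp (-1) * exp ((k - X) / q - X * (real j * \<rho> / 2 + real j * \<delta> / 2))
      \<le> exp (- X * b)"
    by (simp only: diff_conv_add_uminus exp_add mult.assoc mult_minus_left)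
qed (use C in simp)

lemma K_ratio_eventually_lt:
  assumes K: "\<forall>\<^sub>F t in at_right 0. 0 \<le> K t \<and> K t \<le> x t \<and>
      bomber_a v (K t) * bomber_P v (x t - K t) t = bomber_H v (x t) t"
    and e: "0 < e"
  shows "\<forall>\<^sub>F t in at_right 0. K t / x t < 1 / real j + \<rho> * (real j - 1) / 2 + e"
proof (cases "j = 1")
  case True
  show ?thesis using K x_pos
  proof eventually_elim
    case (elim t)
    then have "K t / x t \<le> 1" by (simp add: divide_le_eq_1)
    then show ?case using True e by simp
  qed
next
  case False
  define c where "c = 1 / real j + \<rho> * (real j - 1) / 2"
  define q where "q = real j - 1"
  define \<epsilon> where "\<epsilon> = e / (4 * real j)"
  define \<delta> where "\<delta> = e / (2 * real j * real j)"
  have q: "0 < q" and \<epsilon>: "0 < \<epsilon>" and \<delta>: "0 < \<delta>"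
    using False j_ge_1 e by (auto simp: q_def \<epsilon>_def \<delta>_def)
  obtain C where C: "C > 0" and fail: "\<And>z t. 0 \<le> z \<Longrightarrow> 0 \<le> t \<Longrightarrow>
      C * exp (-t - z / q) * sqrt t ^ j \<le> 1 - bomber_P v z t"
  proof -
    have "real (j - 2) + 1 = q" "j - 2 + 2 = j" using j_ge_1 False by (auto simp: q_def)
    then show ?thesis using P_failure_lower[of "j - 2"] that by auto
  qed
  have "1 - q * (c - \<epsilon> - (real j * \<rho> / 2 + real j * \<delta> / 2) - \<epsilon>) = c + q * (3 * e / (4 * real j))"
    using j_ge_1 by (simp add: c_def q_def \<epsilon>_def \<delta>_def field_simps)
  also have "\<dots> < c + e"
    using j_ge_1 e by (simp add: q_def field_simps add_pos_pos)
  finally have margin: "1 - q * (c - \<epsilon> - (real j * \<rho> / 2 + real j * \<delta> / 2) - \<epsilon>) < c + e" .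
  have "\<forall>\<^sub>F t in at_right 0. - ln (C * exp (-1)) / \<epsilon> \<le> x t"
    using filterlim_x_at_top filterlim_at_top by blast
  then show ?thesis
    using H_failure_eventually_le[OF \<epsilon>] eventually_rate_near[OF \<delta>] K unfolding c_def[symmetric]
  proof eventually_elim
    case (elim t)
    then have t: "0 < t" "t < 1" and "0 < x t" "\<bar>(- ln t) / x t - \<rho>\<bar> \<le> \<delta>"
      and "0 \<le> K t" "K t \<le> x t" "bomber_a v (K t) * bomber_P v (x t - K t) t = bomber_H v (x t) t"
      and "1 - bomber_H v (x t) t \<le> exp (- x t * (c - \<epsilon>))"
      by auto
    moreover have "- ln (C * exp (-1)) \<le> \<epsilon> * x t"
      using elim \<epsilon> by (simp add: field_simps)
    moreover have "\<And>z. 0 \<le> z \<Longrightarrow> C * exp (-t - z / q) * sqrt t ^ j \<le> 1 - bomber_P v z t"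
      using fail t by simp
    ultimately have "K t / x t \<le> 1 - q * (c - \<epsilon> - (real j * \<rho> / 2 + real j * \<delta> / 2) - \<epsilon>)"
      by (intro shot_ratio_le[OF C q])
    then show ?case using margin by linarith
  qed
qed

lemma K_ratio_tendsto:
  assumes "\<forall>\<^sub>F t in at_right 0. 0 \<le> K t \<and> K t \<le> x t \<and>
      bomber_a v (K t) * bomber_P v (x t - K t) t = bomber_H v (x t) t"
  shows "((\<lambda>t. K t / x t) \<longlongrightarrow> 1 / real j + \<rho> * (real j - 1) / 2) (at_right 0)"
  unfolding tendsto_iff
proof (intro allI impI)
  fix e :: real assume e: "0 < e"
  from K_ratio_eventually_gt[OF assms e] K_ratio_eventually_lt[OF assms e]
  show "\<forall>\<^sub>F t in at_right 0. dist (K t / x t) (1 / real j + \<rho> * (real j - 1) / 2) < e"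
    by eventually_elim (auto simp: dist_real_def)
qed

lemma P_failure_rate:
  "((\<lambda>t. \<bar>ln (1 - bomber_P v (x t) t)\<bar> / x t) \<longlongrightarrow> 1 / real j + \<rho> * (real j + 1) / 2) (at_right 0)"
  using j_ge_1 rho_pos
  by (intro tendsto_abs_ln_div_of_exp_bounds x_pos P_failure_eventually_le P_failure_eventually_ge)
    (auto intro: add_pos_nonneg)

lemma H_failure_rate:
  "((\<lambda>t. \<bar>ln (1 - bomber_H v (x t) t)\<bar> / x t) \<longlongrightarrow> 1 / real j + \<rho> * (real j - 1) / 2) (at_right 0)"
  using j_ge_1 rho_pos
  by (intro tendsto_abs_ln_div_of_exp_bounds x_pos H_failure_eventually_le H_failure_eventually_ge)
    (auto intro: add_pos_nonneg)

end

theorem theorem2: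
  fixes v \<rho> :: real and j :: nat and x K :: "real \<Rightarrow> real"
  assumes v: "0 < v" "v \<le> 1"
    and xpos: "\<forall>\<^sub>F t in at_right 0. x t > 0"
    and rho: "0 < \<rho>" "((\<lambda>t. \<bar>ln t\<bar> / x t) \<longlongrightarrow> \<rho>) (at_right 0)"
    and j: "j \<ge> 1" "1 / real ((j + 1) choose 2) \<le> \<rho>"
           "j = 1 \<or> \<rho> < 1 / real (j choose 2)"
    and K: "\<forall>\<^sub>F t in at_right 0. 0 \<le> K t \<and> K t \<le> x t \<and>
              bomber_a v (K t) * bomber_P v (x t - K t) t = bomber_H v (x t) t"
  shows "((\<lambda>t. K t / x t) \<longlongrightarrow> 1 / real j + \<rho> * (real j - 1) / 2) (at_right 0) \<and>
         ((\<lambda>t. \<bar>ln (1 - bomber_H v (x t) t)\<bar> / x t)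
            \<longlongrightarrow> 1 / real j + \<rho> * (real j - 1) / 2) (at_right 0) \<and>
         ((\<lambda>t. \<bar>ln (1 - bomber_P v (x t) t)\<bar> / x t)
            \<longlongrightarrow> 1 / real j + \<rho> * (real j + 1) / 2) (at_right 0)"
proof -
  interpret bomber_regime v \<rho> j x
    using v xpos rho j by unfold_locales auto
  show ?thesis
    using K_ratio_tendsto[OF K] H_failure_rate P_failure_rate by blast
qed

end
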